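(* Let $f:\mathbb{R}^+\to\mathbb{R}$ be twice continuously differentiable with $f>0$, $f'>0$, $f''>0$, and assume there exist $c_1\geq 1/2$ and $c_2>0$ such that $c_1f''(x)\leq f''(y)\leq c_2f''(x)$ for $0<x\leq y\leq 2x$. Then, with implied constants depending only on $f$: (i) $xf''(x)\ll yf''(y)$ for $0<x\leq y$; (ii) $xf''(x)\ll f'(x)\ll xf''(x)\log x$ for $x\geq 2$; (iii) $f'(x)\leq f'(y)\ll f'(x)$ for $0<x\leq y\leq 2x$; (iv) there is $\delta\geq 0$ such that $\log x\ll f'(x)\ll x^\delta$ for all $x\geq 2$; (v) for $0<x\leq a\leq b\leq 2x$ we have $f(b)-f(a)\asymp f'(x)(b-a)$ and $f'(b)-f'(a)\asymp f''(x)(b-a)$.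
   Context: $F\ll G$ means $|F|\leq C G$ for a constant $C$; $F\asymp G$ means $F\ll G$ and $G\ll F$. *)

theory Defs
  imports "HOL-Analysis.Analysis"
begin

end

theory Submission
  imports Defs
begin

text \<open>The doubling bounds make \<open>f''\<close>
  comparable to \<open>f'' x\<close> on \<open>[x/2, 2x]\<close>; hence \<open>f' x \<ge> f' x - f' (x/2) \<ge> x f'' x / (2c)\<close>, and the lower
  bound \<open>f'' x \<le> 2 f'' (2x)\<close> makes \<open>x f'' x\<close> nondecreasing along dyadic chains, so quasi-increasing.
  Integrating \<open>f'' 1 / (2t) \<le> f'' t \<le> 2 x f'' x / t\<close> over \<open>[1, x]\<close> gives the logarithmic bounds,
  and integrating \<open>f'' / f' \<le> 2c / t\<close> gives \<open>f' x \<le> f' 1 * x powr (2c)\<close>.\<close>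

lemma DERIV_le_imp_increment_le:
  fixes g h g' h' :: "real \<Rightarrow> real"
  assumes "a \<le> b"
    and g: "\<And>t. a \<le> t \<Longrightarrow> t \<le> b \<Longrightarrow> (g has_real_derivative g' t) (at t)"
    and h: "\<And>t. a \<le> t \<Longrightarrow> t \<le> b \<Longrightarrow> (h has_real_derivative h' t) (at t)"
    and le: "\<And>t. a \<le> t \<Longrightarrow> t \<le> b \<Longrightarrow> g' t \<le> h' t"
  shows "g b - g a \<le> h b - h a"
proof -
  have "(\<lambda>t. h t - g t) a \<le> (\<lambda>t. h t - g t) b"
  proof (rule DERIV_nonneg_imp_nondecreasing[OF \<open>a \<le> b\<close>])
    fix t assume "a \<le> t" "t \<le> b"
    then show "\<exists>y. ((\<lambda>t. h t - g t) has_real_derivative y) (at t) \<and> y \<ge> 0"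
      using g h le by (intro exI[of _ "h' t - g' t"]) (auto intro: DERIV_diff)
  qed
  then show ?thesis by simp
qed

locale doubling_convex =
  fixes f f' f'' :: "real \<Rightarrow> real" and c :: real
  assumes f_deriv: "x > 0 \<Longrightarrow> (f has_real_derivative f' x) (at x)"
    and f'_deriv: "x > 0 \<Longrightarrow> (f' has_real_derivative f'' x) (at x)"
    and f'_pos: "x > 0 \<Longrightarrow> f' x > 0"
    and f''_pos: "x > 0 \<Longrightarrow> f'' x > 0"
    and f''_doubling_lower: "0 < x \<Longrightarrow> x \<le> y \<Longrightarrow> y \<le> 2 * x \<Longrightarrow> f'' x \<le> 2 * f'' y"
    and f''_doubling_upper: "0 < x \<Longrightarrow> x \<le> y \<Longrightarrow> y \<le> 2 * x \<Longrightarrow> f'' y \<le> c * f'' x"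
begin

lemma doubling_const_ge_1: "c \<ge> 1"
  using f''_doubling_upper[of 1 1] f''_pos[of 1] by simp

lemma f'_mono:
  assumes "0 < x" "x \<le> y"
  shows "f' x \<le> f' y"
  using DERIV_le_imp_increment_le[of x y "\<lambda>_. 0" "\<lambda>_. 0" f' f''] assms f'_deriv f''_pos
  by (simp add: less_imp_le)

lemma x_f''_le_f':
  assumes "x > 0"
  shows "x * f'' x \<le> 2 * c * f' x"
proof -
  have "f'' x / c * x - f'' x / c * (x / 2) \<le> f' x - f' (x / 2)"
  proof (rule DERIV_le_imp_increment_le[where g' = "\<lambda>_. f'' x / c" and h' = f''])
    fix t assume t: "x / 2 \<le> t" "t \<le> x"
    show "((\<lambda>t. f'' x / c * t) has_real_derivative f'' x / c) (at t)"
      by (rule DERIV_cmult_Id)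
    show "(f' has_real_derivative f'' t) (at t)"
      using t assms by (intro f'_deriv) simp
    have "f'' x \<le> c * f'' t"
      using f''_doubling_upper[of t x] t assms by simp
    then show "f'' x / c \<le> f'' t"
      using doubling_const_ge_1 by (simp add: field_simps)
  qed (use assms in simp)
  then have "f'' x / c * (x / 2) \<le> f' x"
    using f'_pos[of "x / 2"] assms by (simp add: algebra_simps)
  then show ?thesis
    using doubling_const_ge_1 by (simp add: field_simps)
qed

lemma x_f''_quasi_mono_dyadic:
  "0 < x \<Longrightarrow> x \<le> y \<Longrightarrow> y \<le> 2 ^ n * x \<Longrightarrow> x * f'' x \<le> 2 * (y * f'' y)"
proof (induction n arbitrary: x)
  case 0
  then show ?case using f''_pos[of x] by simp
next
  case (Suc n)
  show ?case
  proof (cases "y \<le> 2 * x")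
    case True
    then have "x * f'' x \<le> x * (2 * f'' y)"
      using Suc.prems f''_doubling_lower[of x y] by simp
    also have "\<dots> \<le> y * (2 * f'' y)"
      using Suc.prems f''_pos[of y] by (intro mult_right_mono) auto
    finally show ?thesis by simp
  next
    case False
    have "x * f'' x \<le> 2 * x * f'' (2 * x)"
      using f''_doubling_lower[of x "2 * x"] Suc.prems by simp
    also have "\<dots> \<le> 2 * (y * f'' y)"
      using Suc.IH[of "2 * x"] Suc.prems False by (simp add: ac_simps)
    finally show ?thesis .
  qed
qed

lemma x_f''_quasi_mono:
  assumes "0 < x" "x \<le> y"
  shows "x * f'' x \<le> 2 * (y * f'' y)"
proof -
  obtain n where "y / x < 2 ^ n"
    using real_arch_pow[of 2 "y / x"] by auto
  then show ?thesis
    using x_f''_quasi_mono_dyadic[of x y n] assms by (simp add: divide_less_eq)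
qed

lemma f'_le_x_f''_ln_plus_const:
  assumes "x \<ge> 1"
  shows "f' x \<le> f' 1 + 2 * (x * f'' x) * ln x"
proof -
  have "f' x - f' 1 \<le> 2 * (x * f'' x) * ln x - 2 * (x * f'' x) * ln 1"
  proof (rule DERIV_le_imp_increment_le[where g' = f'' and h' = "\<lambda>t. 2 * (x * f'' x) / t"])
    fix t assume t: "1 \<le> t" "t \<le> x"
    show "(f' has_real_derivative f'' t) (at t)"
      using t by (intro f'_deriv) simp
    show "((\<lambda>t. 2 * (x * f'' x) * ln t) has_real_derivative 2 * (x * f'' x) / t) (at t)"
      using t by (auto intro!: derivative_eq_intros)
    show "f'' t \<le> 2 * (x * f'' x) / t"
      using x_f''_quasi_mono[of t x] t by (simp add: field_simps)
  qed (use assms in simp)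
  then show ?thesis by simp
qed

lemma f'_le_x_f''_ln:
  assumes "x \<ge> 2"
  shows "f' x \<le> (2 + 2 * f' 1 / (f'' 1 * ln 2)) * (x * f'' x * ln x)"
proof -
  have "f' 1 = 2 * f' 1 / (f'' 1 * ln 2) * (f'' 1 / 2 * ln 2)"
    using f''_pos[of 1] by (simp add: field_simps)
  also have "\<dots> \<le> 2 * f' 1 / (f'' 1 * ln 2) * (x * f'' x * ln x)"
    using x_f''_quasi_mono[of 1 x] assms f'_pos[of 1] f''_pos[of 1]
    by (intro mult_left_mono mult_mono) auto
  finally show ?thesis
    using f'_le_x_f''_ln_plus_const[of x] assms by (simp add: algebra_simps)
qed

lemma ln_le_f':
  assumes "x \<ge> 1"
  shows "ln x \<le> 2 / f'' 1 * f' x"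
proof -
  have "f'' 1 / 2 * ln x - f'' 1 / 2 * ln 1 \<le> f' x - f' 1"
  proof (rule DERIV_le_imp_increment_le[where g' = "\<lambda>t. f'' 1 / 2 / t" and h' = f''])
    fix t assume t: "1 \<le> t" "t \<le> x"
    show "((\<lambda>t. f'' 1 / 2 * ln t) has_real_derivative f'' 1 / 2 / t) (at t)"
      using t by (auto intro!: derivative_eq_intros)
    show "(f' has_real_derivative f'' t) (at t)"
      using t by (intro f'_deriv) simp
    show "f'' 1 / 2 / t \<le> f'' t"
      using x_f''_quasi_mono[of 1 t] t by (simp add: field_simps)
  qed (use assms in simp)
  then show ?thesis
    using f'_pos[of 1] f''_pos[of 1] by (simp add: field_simps)
qed

lemma f'_le_powr:
  assumes "x \<ge> 1"
  shows "f' x \<le> f' 1 * x powr (2 * c)"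
proof -
  have "ln (f' x) - ln (f' 1) \<le> 2 * c * ln x - 2 * c * ln 1"
  proof (rule DERIV_le_imp_increment_le[where g' = "\<lambda>t. f'' t / f' t" and h' = "\<lambda>t. 2 * c / t"])
    fix t assume t: "1 \<le> t" "t \<le> x"
    show "((\<lambda>t. ln (f' t)) has_real_derivative f'' t / f' t) (at t)"
      using t f'_deriv[of t] f'_pos[of t] by (auto intro!: derivative_eq_intros)
    show "((\<lambda>t. 2 * c * ln t) has_real_derivative 2 * c / t) (at t)"
      using t by (auto intro!: derivative_eq_intros)
    show "f'' t / f' t \<le> 2 * c / t"
      using x_f''_le_f'[of t] t f'_pos[of t] by (simp add: field_simps)
  qed (use assms in simp)
  then have "exp (ln (f' x)) \<le> exp (ln (f' 1) + 2 * c * ln x)"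
    by simp
  then show ?thesis
    using f'_pos[of 1] f'_pos[of x] assms by (simp add: exp_add powr_def)
qed

lemma f'_increment_bounds:
  assumes "0 < x" "x \<le> a" "a \<le> b" "b \<le> 2 * x"
  shows "f'' x * (b - a) \<le> 2 * (f' b - f' a)" and "f' b - f' a \<le> c * f'' x * (b - a)"
proof -
  have D: "\<And>t. a \<le> t \<Longrightarrow> t \<le> b \<Longrightarrow> (f' has_real_derivative f'' t) (at t)"
    using assms by (intro f'_deriv) simp
  have "f'' x / 2 \<le> f'' t" if "a \<le> t" "t \<le> b" for t
    using assms that f''_doubling_lower[of x t] by simp
  then have "f'' x / 2 * b - f'' x / 2 * a \<le> f' b - f' a"
    by (intro DERIV_le_imp_increment_le[OF \<open>a \<le> b\<close> DERIV_cmult_Id D])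
  then show "f'' x * (b - a) \<le> 2 * (f' b - f' a)"
    by (simp add: algebra_simps)
  have "f'' t \<le> c * f'' x" if "a \<le> t" "t \<le> b" for t
    using assms that f''_doubling_upper[of x t] by simp
  then have "f' b - f' a \<le> c * f'' x * b - c * f'' x * a"
    by (intro DERIV_le_imp_increment_le[OF \<open>a \<le> b\<close> D DERIV_cmult_Id])
  then show "f' b - f' a \<le> c * f'' x * (b - a)"
    by (simp add: algebra_simps)
qed

lemma f'_doubling:
  assumes "0 < x" "x \<le> y" "y \<le> 2 * x"
  shows "f' y \<le> (1 + 2 * c\<^sup>2) * f' x"
proof -
  have "f' y - f' x \<le> c * f'' x * (y - x)"
    using f'_increment_bounds(2)[of x x y] assms by simp
  also have "\<dots> \<le> c * (f'' x * x)"
    using assms f''_pos[of x] doubling_const_ge_1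
    unfolding mult.assoc by (intro mult_left_mono) auto
  also have "\<dots> \<le> c * (2 * c * f' x)"
    using x_f''_le_f'[OF \<open>0 < x\<close>] doubling_const_ge_1 by (simp add: mult.commute)
  finally show ?thesis
    by (simp add: algebra_simps power2_eq_square)
qed

lemma f_increment_bounds:
  assumes "0 < x" "x \<le> a" "a \<le> b" "b \<le> 2 * x"
  shows "f' x * (b - a) \<le> f b - f a" and "f b - f a \<le> (1 + 2 * c\<^sup>2) * f' x * (b - a)"
proof -
  have D: "\<And>t. a \<le> t \<Longrightarrow> t \<le> b \<Longrightarrow> (f has_real_derivative f' t) (at t)"
    using assms by (intro f_deriv) simp
  have "f' x \<le> f' t" if "a \<le> t" for t
    using assms that f'_mono[of x t] by simp
  then have "f' x * b - f' x * a \<le> f b - f a"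
    by (intro DERIV_le_imp_increment_le[OF \<open>a \<le> b\<close> DERIV_cmult_Id D])
  then show "f' x * (b - a) \<le> f b - f a"
    by (simp add: algebra_simps)
  have "f' t \<le> (1 + 2 * c\<^sup>2) * f' x" if "a \<le> t" "t \<le> b" for t
    using assms that f'_doubling[of x t] by simp
  then have "f b - f a \<le> (1 + 2 * c\<^sup>2) * f' x * b - (1 + 2 * c\<^sup>2) * f' x * a"
    by (intro DERIV_le_imp_increment_le[OF \<open>a \<le> b\<close> D DERIV_cmult_Id])
  then show "f b - f a \<le> (1 + 2 * c\<^sup>2) * f' x * (b - a)"
    by (simp add: algebra_simps)
qed

lemma x_f''_bigO_later:
  "\<exists>C. \<forall>x y. 0 < x \<and> x \<le> y \<longrightarrow> \<bar>x * f'' x\<bar> \<le> C * (y * f'' y)"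
proof (intro exI[of _ 2] allI impI)
  fix x y :: real assume "0 < x \<and> x \<le> y"
  then show "\<bar>x * f'' x\<bar> \<le> 2 * (y * f'' y)"
    using x_f''_quasi_mono[of x y] f''_pos[of x] by simp
qed

lemma x_f''_bigO_f'_bigO_x_f''_ln:
  "\<exists>C. \<forall>x. x \<ge> 2 \<longrightarrow> \<bar>x * f'' x\<bar> \<le> C * f' x \<and> \<bar>f' x\<bar> \<le> C * (x * f'' x * ln x)"
proof -
  define K where "K = 2 + 2 * f' 1 / (f'' 1 * ln 2)"
  have "K > 0"
    unfolding K_def using f'_pos[of 1] f''_pos[of 1] by (simp add: add_pos_nonneg)
  show ?thesis
  proof (intro exI[of _ "2 * c + K"] allI impI conjI)
    fix x :: real assume "x \<ge> 2"
    then show "\<bar>x * f'' x\<bar> \<le> (2 * c + K) * f' x"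
      using x_f''_le_f'[of x] f''_pos[of x] mult_pos_pos[OF \<open>K > 0\<close> f'_pos[of x]]
      by (simp add: distrib_right)
    have "0 < 2 * c * (x * f'' x * ln x)"
      using \<open>x \<ge> 2\<close> f''_pos[of x] doubling_const_ge_1 by simp
    then have "f' x \<le> 2 * c * (x * f'' x * ln x) + K * (x * f'' x * ln x)"
      using f'_le_x_f''_ln[of x, folded K_def] \<open>x \<ge> 2\<close> by linarith
    then show "\<bar>f' x\<bar> \<le> (2 * c + K) * (x * f'' x * ln x)"
      using f'_pos[of x] \<open>x \<ge> 2\<close> by (simp add: distrib_right)
  qed
qed

lemma f'_mono_bigO_doubling:
  "\<exists>C. \<forall>x y. 0 < x \<and> x \<le> y \<and> y \<le> 2 * x \<longrightarrow> f' x \<le> f' y \<and> \<bar>f' y\<bar> \<le> C * f' x"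
proof (intro exI[of _ "1 + 2 * c\<^sup>2"] allI impI conjI)
  fix x y :: real assume "0 < x \<and> x \<le> y \<and> y \<le> 2 * x"
  then show "f' x \<le> f' y" and "\<bar>f' y\<bar> \<le> (1 + 2 * c\<^sup>2) * f' x"
    using f'_mono[of x y] f'_doubling[of x y] f'_pos[of y] by auto
qed

lemma ln_bigO_f'_bigO_powr:
  "\<exists>\<delta>\<ge>0. \<exists>C. \<forall>x. x \<ge> 2 \<longrightarrow> \<bar>ln x\<bar> \<le> C * f' x \<and> \<bar>f' x\<bar> \<le> C * x powr \<delta>"
proof (rule exI[of _ "2 * c"], rule conjI)
  show "2 * c \<ge> 0"
    using doubling_const_ge_1 by simp
  show "\<exists>C. \<forall>x. x \<ge> 2 \<longrightarrow> \<bar>ln x\<bar> \<le> C * f' x \<and> \<bar>f' x\<bar> \<le> C * x powr (2 * c)"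
  proof (intro exI[of _ "2 / f'' 1 + f' 1"] allI impI conjI)
    fix x :: real assume "x \<ge> 2"
    then show "\<bar>ln x\<bar> \<le> (2 / f'' 1 + f' 1) * f' x"
      using ln_le_f'[of x] mult_pos_pos[OF f'_pos[of 1] f'_pos[of x]] by (simp add: distrib_right)
    have "0 < 2 * x powr (2 * c) / f'' 1"
      using \<open>x \<ge> 2\<close> f''_pos[of 1] by simp
    then show "\<bar>f' x\<bar> \<le> (2 / f'' 1 + f' 1) * x powr (2 * c)"
      using f'_le_powr[of x] \<open>x \<ge> 2\<close> f'_pos[of x] by (simp add: distrib_right)
  qed
qed

lemma increments_asymp:
  "\<exists>C. \<forall>x a b. 0 < x \<and> x \<le> a \<and> a \<le> b \<and> b \<le> 2 * x \<longrightarrow>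
      \<bar>f b - f a\<bar> \<le> C * (f' x * (b - a)) \<and> \<bar>f' x * (b - a)\<bar> \<le> C * (f b - f a)
    \<and> \<bar>f' b - f' a\<bar> \<le> C * (f'' x * (b - a)) \<and> \<bar>f'' x * (b - a)\<bar> \<le> C * (f' b - f' a)"
proof (intro exI[of _ "2 + 2 * c\<^sup>2"] allI impI conjI)
  fix x a b :: real assume "0 < x \<and> x \<le> a \<and> a \<le> b \<and> b \<le> 2 * x"
  then have xab: "0 < x" "x \<le> a" "a \<le> b" "b \<le> 2 * x" by auto
  have P: "0 \<le> f' x * (b - a)" and Q: "0 \<le> f'' x * (b - a)"
    using xab f'_pos[of x] f''_pos[of x] by auto
  have "c \<le> 2 + 2 * c\<^sup>2"
    using doubling_const_ge_1 by (simp add: power2_eq_square add_increasing mult_mono)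
  note f = f_increment_bounds[OF xab] and f' = f'_increment_bounds[OF xab]
  show "\<bar>f b - f a\<bar> \<le> (2 + 2 * c\<^sup>2) * (f' x * (b - a))"
    using f P mult_right_mono[OF _ P, of "1 + 2 * c\<^sup>2" "2 + 2 * c\<^sup>2"] by simp
  show "\<bar>f' x * (b - a)\<bar> \<le> (2 + 2 * c\<^sup>2) * (f b - f a)"
    using f P mult_right_mono[of 1 "2 + 2 * c\<^sup>2" "f b - f a"] by simp
  show "\<bar>f' b - f' a\<bar> \<le> (2 + 2 * c\<^sup>2) * (f'' x * (b - a))"
    using f' Q mult_right_mono[OF \<open>c \<le> 2 + 2 * c\<^sup>2\<close> Q]
    by (simp add: mult.assoc)
  show "\<bar>f'' x * (b - a)\<bar> \<le> (2 + 2 * c\<^sup>2) * (f' b - f' a)"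
    using f' Q mult_right_mono[of 2 "2 + 2 * c\<^sup>2" "f' b - f' a"] by simp
qed

end

theorem lemma7:
  fixes f f' f'' :: "real \<Rightarrow> real"
  assumes d1: "\<And>x. x > 0 \<Longrightarrow> (f has_real_derivative f' x) (at x)"
      and d2: "\<And>x. x > 0 \<Longrightarrow> (f' has_real_derivative f'' x) (at x)"
      and cont2: "continuous_on {0<..} f''"
      and pos0: "\<And>x. x > 0 \<Longrightarrow> f x > 0"
      and pos1: "\<And>x. x > 0 \<Longrightarrow> f' x > 0"
      and pos2: "\<And>x. x > 0 \<Longrightarrow> f'' x > 0"
      and reg: "\<exists>c1 c2. c1 \<ge> 1/2 \<and> c2 > 0 \<and>
                  (\<forall>x y. 0 < x \<and> x \<le> y \<and> y \<le> 2*x \<longrightarrow>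
                       c1 * f'' x \<le> f'' y \<and> f'' y \<le> c2 * f'' x)"
  shows
    "(\<exists>C. \<forall>x y. 0 < x \<and> x \<le> y \<longrightarrow> \<bar>x * f'' x\<bar> \<le> C * (y * f'' y))
     \<and> (\<exists>C. \<forall>x. x \<ge> 2 \<longrightarrow>
            \<bar>x * f'' x\<bar> \<le> C * f' x \<and> \<bar>f' x\<bar> \<le> C * (x * f'' x * ln x))
     \<and> (\<exists>C. \<forall>x y. 0 < x \<and> x \<le> y \<and> y \<le> 2*x \<longrightarrow>
            f' x \<le> f' y \<and> \<bar>f' y\<bar> \<le> C * f' x)
     \<and> (\<exists>\<delta>\<ge>0. \<exists>C. \<forall>x. x \<ge> 2 \<longrightarrow>
            \<bar>ln x\<bar> \<le> C * f' x \<and> \<bar>f' x\<bar> \<le> C * x powr \<delta>)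
     \<and> (\<exists>C. \<forall>x a b. 0 < x \<and> x \<le> a \<and> a \<le> b \<and> b \<le> 2*x \<longrightarrow>
            \<bar>f b - f a\<bar> \<le> C * (f' x * (b - a)) \<and> \<bar>f' x * (b - a)\<bar> \<le> C * (f b - f a)
          \<and> \<bar>f' b - f' a\<bar> \<le> C * (f'' x * (b - a)) \<and> \<bar>f'' x * (b - a)\<bar> \<le> C * (f' b - f' a))"
proof -
  obtain c1 c where "c1 \<ge> 1/2" and doubling:
    "\<And>x y. 0 < x \<Longrightarrow> x \<le> y \<Longrightarrow> y \<le> 2*x \<Longrightarrow> c1 * f'' x \<le> f'' y \<and> f'' y \<le> c * f'' x"
    using reg by blast
  interpret doubling_convex f f' f'' c
  proof
    fix x y :: real assume xy: "0 < x" "x \<le> y" "y \<le> 2 * x"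
    have "f'' x \<le> 2 * c1 * f'' x"
      using \<open>c1 \<ge> 1/2\<close> pos2[of x] xy by (simp add: mult_le_cancel_right1)
    then show "f'' x \<le> 2 * f'' y"
      using doubling[OF xy] by simp
    show "f'' y \<le> c * f'' x"
      using doubling[OF xy] by simp
  qed (use d1 d2 pos1 pos2 in auto)
  show ?thesis
    using x_f''_bigO_later x_f''_bigO_f'_bigO_x_f''_ln f'_mono_bigO_doubling
      ln_bigO_f'_bigO_powr increments_asymp
    by blast
qed

end
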